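(* Let $S$ be an isolated invariant set for $f$. Suppose $P'=(N,L')$ and $P=(N\cup L,L)$ are filtration pairs for $S$ with $L'\subset L$ and $f(L)\subset\operatorname{Int}L$. Then the pointed space maps $f_{P'}$ and $f_P$ are shift equivalent.
   Context: Let $X$ be a locally compact metric space, $U\subset X$ open and $f:U\to X$ continuous. A solution through $x$ is a map $\sigma:\mathbb Z\to U$ with $\sigma(0)=x$ and $f(\sigma(n))=\sigma(n+1)$ for all $n$; for $N\subset U$, $\operatorname{Inv}N$ is the set of $x\in N$ admitting a solution through $x$ with values in $N$. A compact $N\subset U$ is an isolating neighborhood if $\operatorname{Inv}N\subset\operatorname{Int}N$; $S$ is an isolated invariant set if $S=\operatorname{Inv}N$ for some isolating neighborhood $N$. The exit set is $N^-=\{x\in N:f(x)\notin\operatorname{Int}N\}$. A filtration pair for $S$ is a pair of compact sets $L\subset N$ in the interior of the domain of $f$, each the closure of its interior, with (1) $\operatorname{cl}(N\setminus L)$ an isolating neighborhood and $\operatorname{Inv}\operatorname{cl}(N\setminus L)=S$; (2) $L$ a neighborhood of $N^-$ in $N$; (3) $f(L)\cap\operatorname{cl}(N\setminus L)=\emptyset$. For a filtration pair $P=(N,L)$, $N_L=N/L$ with $L$ collapsed to the base point $[L]$ (if $L=\emptyset$, a disjoint point $[L]$ is adjoined), $p:N\to N_L$ the quotient map, and the pointed space map $f_P:N_L\to N_L$ is $f_P([L])=[L]$, $f_P(p(x))=p(f(x))$ for $x\in N\setminus L$. Base-point preserving maps $F:Y\to Y$, $G:Y'\to Y'$ are shift equivalent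 if there exist $m\in\mathbb Z^+$ and continuous base-point preserving $r:Y\to Y'$, $s:Y'\to Y$ with $r\circ F=G\circ r$, $s\circ G=F\circ s$, $s\circ r=F^m$, $r\circ s=G^m$. *)

theory Defs
  imports "HOL-Analysis.Analysis"
begin

text \<open>Ambient space: a locally compact subset X of a metric space type, with the
  subspace topology. Interior and closure are taken relative to X.\<close>

definition Inv :: "('a \<Rightarrow> 'a) \<Rightarrow> 'a set \<Rightarrow> 'a set" where
  "Inv f N = {x \<in> N. \<exists>\<sigma>::int \<Rightarrow> 'a. \<sigma> 0 = x \<and> (\<forall>n. \<sigma> n \<in> N) \<and> (\<forall>n. f (\<sigma> n) = \<sigma> (n + 1))}"

definition isolating_nbhd :: "'a::metric_space set \<Rightarrow> 'a set \<Rightarrow> ('a \<Rightarrow> 'a) \<Rightarrow> 'a set \<Rightarrow> bool" where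
  "isolating_nbhd X U f N \<longleftrightarrow> compact N \<and> N \<subseteq> U \<and> Inv f N \<subseteq> (top_of_set X) interior_of N"

definition isolated_invariant_set :: "'a::metric_space set \<Rightarrow> 'a set \<Rightarrow> ('a \<Rightarrow> 'a) \<Rightarrow> 'a set \<Rightarrow> bool" where
  "isolated_invariant_set X U f S \<longleftrightarrow> (\<exists>N. isolating_nbhd X U f N \<and> S = Inv f N)"

definition exit_set :: "'a::metric_space set \<Rightarrow> ('a \<Rightarrow> 'a) \<Rightarrow> 'a set \<Rightarrow> 'a set" where
  "exit_set X f N = {x \<in> N. f x \<notin> (top_of_set X) interior_of N}"

definition regular_closed_in :: "'a::metric_space set \<Rightarrow> 'a set \<Rightarrow> bool" where
  "regular_closed_in X A \<longleftrightarrow> (top_of_set X) closure_of ((top_of_set X) interior_of A) = A"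

text \<open>Filtration pair (N, L) for S. The domain of f is the open set U, so its interior is U.\<close>
definition filtration_pair :: "'a::metric_space set \<Rightarrow> 'a set \<Rightarrow> ('a \<Rightarrow> 'a) \<Rightarrow> 'a set \<Rightarrow> 'a set \<Rightarrow> 'a set \<Rightarrow> bool" where
  "filtration_pair X U f S N L \<longleftrightarrow>
     compact N \<and> compact L \<and> L \<subseteq> N \<and> N \<subseteq> U \<and>
     regular_closed_in X N \<and> regular_closed_in X L \<and>
     isolating_nbhd X U f ((top_of_set X) closure_of (N - L)) \<and>
     Inv f ((top_of_set X) closure_of (N - L)) = S \<and>
     exit_set X f N \<subseteq> (top_of_set N) interior_of L \<and>
     f ` L \<inter> (top_of_set X) closure_of (N - L) = {}"

text \<open>The pointed quotient space N/L. Points are sets: the class of x \<in> N - L is {x},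
  and the base point is L itself (when L = {} this is the extra point {}, disjoint from
  all classes {x}).\<close>
definition pquot :: "'a set \<Rightarrow> 'a \<Rightarrow> 'a set" where
  "pquot L x = (if x \<in> L then L else {x})"

definition quot_carrier :: "'a set \<Rightarrow> 'a set \<Rightarrow> 'a set set" where
  "quot_carrier N L = insert L (pquot L ` N)"

definition quot_open :: "'a::topological_space set \<Rightarrow> 'a set \<Rightarrow> 'a set set \<Rightarrow> bool" where
  "quot_open N L V \<longleftrightarrow> V \<subseteq> quot_carrier N L \<and> openin (top_of_set N) {x \<in> N. pquot L x \<in> V}"

lemma istopology_quot_open: "istopology (quot_open N L)"
  unfolding istopology_def quot_open_def
proof (intro conjI allI impI)
  fix S T assume h: "S \<subseteq> quot_carrier N L \<and> openin (top_of_set N) {x \<in> N. pquot L x \<in> S}"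
    "T \<subseteq> quot_carrier N L \<and> openin (top_of_set N) {x \<in> N. pquot L x \<in> T}"
  show "S \<inter> T \<subseteq> quot_carrier N L" using h by blast
  have "{x \<in> N. pquot L x \<in> S \<inter> T} = {x \<in> N. pquot L x \<in> S} \<inter> {x \<in> N. pquot L x \<in> T}" by blast
  then show "openin (top_of_set N) {x \<in> N. pquot L x \<in> S \<inter> T}" using h by (simp add: openin_Int)
next
  fix K assume h: "\<forall>S\<in>K. S \<subseteq> quot_carrier N L \<and> openin (top_of_set N) {x \<in> N. pquot L x \<in> S}"
  show "\<Union>K \<subseteq> quot_carrier N L" using h by blast
  have "{x \<in> N. pquot L x \<in> \<Union>K} = (\<Union>S\<in>K. {x \<in> N. pquot L x \<in> S})" by blast
  then show "openin (top_of_set N) {x \<in> N. pquot L x \<in> \<Union>K}" using h by (auto intro!: openin_Union)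
qed

definition quot_space :: "'a::topological_space set \<Rightarrow> 'a set \<Rightarrow> 'a set topology" where
  "quot_space N L = topology (quot_open N L)"

lemma openin_quot_space: "openin (quot_space N L) V \<longleftrightarrow> quot_open N L V"
  unfolding quot_space_def by (simp add: istopology_quot_open)

definition fP :: "'a set \<Rightarrow> 'a set \<Rightarrow> ('a \<Rightarrow> 'a) \<Rightarrow> 'a set \<Rightarrow> 'a set" where
  "fP N L f y = (if y = L then L else pquot L (f (the_elem y)))"

definition shift_equivalent ::
  "'b topology \<Rightarrow> 'b \<Rightarrow> ('b \<Rightarrow> 'b) \<Rightarrow> 'c topology \<Rightarrow> 'c \<Rightarrow> ('c \<Rightarrow> 'c) \<Rightarrow> bool" where
  "shift_equivalent Y y0 F Y' y0' G \<longleftrightarrow>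
     (\<exists>m::nat. m > 0 \<and> (\<exists>r s.
        continuous_map Y Y' r \<and> continuous_map Y' Y s \<and> r y0 = y0' \<and> s y0' = y0 \<and>
        (\<forall>y\<in>topspace Y. r (F y) = G (r y)) \<and>
        (\<forall>y\<in>topspace Y'. s (G y) = F (s y)) \<and>
        (\<forall>y\<in>topspace Y. s (r y) = (F ^^ m) y) \<and>
        (\<forall>y\<in>topspace Y'. r (s y) = (G ^^ m) y)))"

end

theory Submission
  imports Defs
begin

(*
  Since f(L) is contained in L, the compact set K = f(L) \<inter> cl(N - L') contains no full solution:
  such a solution would lie in Inv cl(N - L') = S = Inv cl((N \<union> L) - L), which f(L) misses.
  By compactness every orbit leaves K within a uniform time m, so every point of N \<inter> L reaches L'
  within M = m + 1 steps, i.e. the iterate f_P'^M sends the image of N \<inter> L to the base point.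
  Hence the map r : N/L' \<rightarrow> (N \<union> L)/L induced by inclusion (quot_incl) and the map
  s = f_P'^M extended by s [L] = [L'] (collapsed_iterate) are continuous, and they satisfy
  r f_P' = f_P r, s f_P = f_P' s, s r = f_P'^M and r s = f_P^M.
*)

lemma compact_nest_nonempty:
  fixes C :: "nat \<Rightarrow> 'a::t2_space set"
  assumes compact: "\<And>n. compact (C n)" and nonempty: "\<And>n. C n \<noteq> {}"
    and decreasing: "\<And>n. C (Suc n) \<subseteq> C n"
  shows "(\<Inter>n. C n) \<noteq> {}"
proof (rule compact_space_imp_nest)
  show "compact_space (top_of_set (C 0))"
    using compact[of 0] by (simp add: compact_space_subtopology)
  show "decseq C"
    using decreasing by (simp add: decseq_Suc_iff)
  then show "closedin (top_of_set (C 0)) (C n)" for n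
    by (intro closed_subset) (auto simp: decseq_def compact compact_imp_closed)
qed (fact nonempty)

lemma Inv_mono: "A \<subseteq> B \<Longrightarrow> Inv f A \<subseteq> Inv f B"
  unfolding Inv_def by blast

lemma Inv_subset: "Inv f A \<subseteq> A"
  unfolding Inv_def by blast

lemma subset_Inv_if_image_eq:
  assumes "f ` J = J"
  shows "J \<subseteq> Inv f J"
proof
  fix y assume "y \<in> J"
  obtain g where g: "\<And>z. z \<in> J \<Longrightarrow> g z \<in> J \<and> f (g z) = z"
  proof -
    have "\<forall>z\<in>J. \<exists>w. w \<in> J \<and> f w = z"
      using equalityD2[OF assms] by blast
    then show ?thesis
      using that by (metis (no_types))
  qed
  have f_iter: "(f^^k) y \<in> J" and g_iter: "(g^^k) y \<in> J" for k
    using \<open>y \<in> J\<close> equalityD1[OF assms] g by (induction k) auto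
  define \<sigma> where "\<sigma> n = (if 0 \<le> n then (f^^nat n) y else (g^^nat (-n)) y)" for n :: int
  have "f (\<sigma> n) = \<sigma> (n + 1)" for n
  proof (cases n rule: int_cases)
    case (nonneg k)
    then show ?thesis by (simp add: \<sigma>_def nat_add_distrib)
  next
    case (neg k)
    then have "f (\<sigma> n) = (g^^k) y"
      using g[OF g_iter[of k]] by (simp add: \<sigma>_def nat_add_distrib)
    also have "\<dots> = \<sigma> (n + 1)"
      using neg by (cases k) (simp_all add: \<sigma>_def nat_add_distrib)
    finally show ?thesis .
  qed
  moreover have "\<sigma> n \<in> J" for n
    using f_iter g_iter by (simp add: \<sigma>_def)
  ultimately show "y \<in> Inv f J"
    unfolding Inv_def using \<open>y \<in> J\<close> by (auto intro!: exI[of _ \<sigma>] simp: \<sigma>_def)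
qed

lemma Inv_nonempty_if_forward_invariant:
  fixes f :: "'a::t2_space \<Rightarrow> 'a"
  assumes "compact I" "I \<noteq> {}" and cont: "continuous_on I f" and into: "f ` I \<subseteq> I"
  shows "Inv f I \<noteq> {}"
proof -
  define E where "E m = (f^^m) ` I" for m
  have E_Suc: "E (Suc m) = f ` E m" for m
    by (simp add: E_def image_comp)
  have E_subset: "E m \<subseteq> I" for m
    by (induction m) (use into in \<open>auto simp: E_Suc E_def\<close>)
  have E_compact: "compact (E m)" for m
  proof (induction m)
    case 0
    then show ?case using \<open>compact I\<close> by (simp add: E_def)
  next
    case (Suc m)
    then show ?case
      unfolding E_Suc by (rule compact_continuous_image[OF continuous_on_subset[OF cont E_subset]])
  qed
  have E_decreasing: "E (Suc m) \<subseteq> E m" for m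
    using image_mono[OF into, of "f^^m"] by (simp add: E_def image_comp funpow_swap1)
  have E_nonempty: "E m \<noteq> {}" for m
    using \<open>I \<noteq> {}\<close> by (simp add: E_def)
  define J where "J = (\<Inter>m. E m)"
  have J_nonempty: "J \<noteq> {}"
    unfolding J_def using E_compact E_nonempty E_decreasing by (rule compact_nest_nonempty)
  have "f ` J \<subseteq> J"
    using E_Suc E_decreasing unfolding J_def by blast
  moreover have "J \<subseteq> f ` J"
  proof
    fix y assume "y \<in> J"
    define D where "D m = E m \<inter> f -` {y}" for m
    have "compact (D m)" for m
    proof -
      have "closed (E m \<inter> f -` {y})"
        using continuous_on_subset[OF cont E_subset] compact_imp_closed[OF E_compact]
        by (rule continuous_closed_preimage) simp
      then have "compact (E m \<inter> (E m \<inter> f -` {y}))"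
        by (rule compact_Int_closed[OF E_compact])
      then show ?thesis
        by (simp add: D_def)
    qed
    moreover have "D m \<noteq> {}" for m
    proof -
      have "y \<in> E (Suc m)"
        using \<open>y \<in> J\<close> unfolding J_def by blast
      then show ?thesis
        unfolding D_def E_Suc by blast
    qed
    moreover have "D (Suc m) \<subseteq> D m" for m
      using E_decreasing by (auto simp: D_def)
    ultimately obtain z where "z \<in> (\<Inter>m. D m)"
      by (metis compact_nest_nonempty ex_in_conv)
    then show "y \<in> f ` J"
      unfolding J_def D_def by blast
  qed
  ultimately have "J \<subseteq> Inv f J"
    by (intro subset_Inv_if_image_eq) blast
  moreover have "J \<subseteq> I"
    using E_subset unfolding J_def by blast
  ultimately have "J \<subseteq> Inv f I"
    using Inv_mono by blast
  with J_nonempty show ?thesis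
    by blast
qed

lemma uniform_exit_time:
  fixes f :: "'a::t2_space \<Rightarrow> 'a"
  assumes "compact K" and cont: "continuous_on K f" and "Inv f K = {}"
  shows "\<exists>m. \<forall>y\<in>K. \<exists>j\<le>m. (f^^j) y \<notin> K"
proof (rule ccontr)
  assume "\<not> ?thesis"
  then have long_stays: "\<exists>y\<in>K. \<forall>j\<le>m. (f^^j) y \<in> K" for m
    by blast
  define C where "C m = {y. \<forall>j<Suc m. (f^^j) y \<in> K}" for m
  have C_0: "C 0 = K"
    by (simp add: C_def)
  have C_Suc: "C (Suc m) = K \<inter> f -` C m" for m
    unfolding C_def All_less_Suc2[where n = "Suc m"] by (auto simp: funpow_swap1)
  have C_compact: "compact (C m)" for m
  proof (induction m)
    case (Suc m)
    have "closed (K \<inter> f -` C m)"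
      using cont compact_imp_closed[OF \<open>compact K\<close>] compact_imp_closed[OF Suc]
      by (rule continuous_closed_preimage)
    then have "compact (K \<inter> (K \<inter> f -` C m))"
      by (rule compact_Int_closed[OF \<open>compact K\<close>])
    then show ?case
      by (simp add: C_Suc)
  qed (simp add: C_0 \<open>compact K\<close>)
  define I where "I = (\<Inter>m. C m)"
  have I_eq: "I = {y. \<forall>j. (f^^j) y \<in> K}"
    by (auto simp: I_def C_def)
  have "I \<noteq> {}"
    unfolding I_def
  proof (rule compact_nest_nonempty[OF C_compact])
    show "C m \<noteq> {}" for m
      using long_stays[of m] by (auto simp: C_def less_Suc_eq_le)
    show "C (Suc m) \<subseteq> C m" for m
      by (auto simp: C_def)
  qed
  moreover have "I \<subseteq> K"
    using C_0 unfolding I_def by blast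
  moreover have "compact I"
  proof -
    have "closed I"
      unfolding I_def using C_compact compact_imp_closed by blast
    then have "compact (K \<inter> I)"
      by (rule compact_Int_closed[OF \<open>compact K\<close>])
    with \<open>I \<subseteq> K\<close> show ?thesis
      by (simp add: Int_absorb1)
  qed
  moreover have "f ` I \<subseteq> I"
  proof (clarsimp simp: I_eq)
    fix y j assume "\<forall>j. (f^^j) y \<in> K"
    then have "(f^^Suc j) y \<in> K"
      by blast
    then show "(f^^j) (f y) \<in> K"
      by (simp add: funpow_swap1)
  qed
  ultimately have "Inv f I \<noteq> {}"
    using Inv_nonempty_if_forward_invariant continuous_on_subset[OF cont] by blast
  with \<open>I \<subseteq> K\<close> \<open>Inv f K = {}\<close> show False
    using Inv_mono by blast
qed

lemma pquot_in_base [simp]: "x \<in> L \<Longrightarrow> pquot L x = L"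
  by (simp add: pquot_def)

lemma pquot_notin_base [simp]: "x \<notin> L \<Longrightarrow> pquot L x = {x}"
  by (simp add: pquot_def)

lemma base_in_quot_carrier [simp]: "L \<in> quot_carrier N L"
  by (simp add: quot_carrier_def)

lemma pquot_in_quot_carrier: "x \<in> N \<Longrightarrow> pquot L x \<in> quot_carrier N L"
  by (simp add: quot_carrier_def)

lemma quot_carrierE:
  assumes "y \<in> quot_carrier N L"
  obtains "y = L" | x where "x \<in> N" "x \<notin> L" "y = {x}"
  using assms unfolding quot_carrier_def pquot_def by (auto split: if_splits)

lemma topspace_quot_space [simp]: "topspace (quot_space N L) = quot_carrier N L"
proof
  show "topspace (quot_space N L) \<subseteq> quot_carrier N L"
    unfolding topspace_def openin_quot_space quot_open_def by blast
  have "quot_open N L (quot_carrier N L)"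
    unfolding quot_open_def by (simp add: pquot_in_quot_carrier cong: conj_cong)
  then show "quot_carrier N L \<subseteq> topspace (quot_space N L)"
    by (simp add: openin_subset flip: openin_quot_space)
qed

lemma continuous_map_pquot: "continuous_map (top_of_set N) (quot_space N L) (pquot L)"
  unfolding continuous_map_def openin_quot_space quot_open_def
  by (auto simp: pquot_in_quot_carrier)

lemma continuous_map_from_quot_space:
  assumes "g L \<in> topspace Y" and cont: "continuous_map (top_of_set N) Y (g \<circ> pquot L)"
  shows "continuous_map (quot_space N L) Y g"
  unfolding continuous_map_def topspace_quot_space
proof (intro conjI allI impI)
  show "g \<in> quot_carrier N L \<rightarrow> topspace Y"
  proof
    fix y assume "y \<in> quot_carrier N L"
    then show "g y \<in> topspace Y"
    proof (cases rule: quot_carrierE)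
      case (2 x)
      then show ?thesis
        using continuous_map_image_subset_topspace[OF cont] by auto
    qed (use assms in simp)
  qed
  fix V assume "openin Y V"
  then have "openin (top_of_set N) {x \<in> N. g (pquot L x) \<in> V}"
    using openin_continuous_map_preimage[OF cont] by simp
  then show "openin (quot_space N L) {y \<in> quot_carrier N L. g y \<in> V}"
    unfolding openin_quot_space quot_open_def by (simp add: pquot_in_quot_carrier cong: conj_cong)
qed

lemma continuous_map_funpow: "continuous_map X X g \<Longrightarrow> continuous_map X X (g^^k)"
  by (induction k) (auto intro: continuous_map_compose)

lemma fP_base [simp]: "fP N L f L = L"
  by (simp add: fP_def)

lemma fP_pquot: "fP N L f (pquot L x) = (if x \<in> L then L else pquot L (f x))"
  by (auto simp: fP_def)

lemma fP_singleton [simp]: "x \<notin> L \<Longrightarrow> fP N L f {x} = pquot L (f x)"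
  by (auto simp: fP_def)

lemma funpow_fP_base [simp]: "(fP N L f ^^ k) L = L"
  by (induction k) auto

lemma funpow_fP_pquot:
  "(fP N L f ^^ k) (pquot L x) = (if \<exists>i\<le>k. (f^^i) x \<in> L then L else {(f^^k) x})"
proof (induction k)
  case (Suc k)
  show ?case
  proof (cases "\<exists>i\<le>k. (f^^i) x \<in> L")
    case True
    then show ?thesis
      using Suc by (auto intro: le_SucI)
  next
    case False
    then show ?thesis
      using Suc fP_pquot[of N L f "(f^^k) x"] by (auto simp: le_Suc_eq)
  qed
qed (simp add: pquot_def)

lemma continuous_map_top_of_set_cases:
  assumes "closed S" "closed T" "A \<subseteq> S \<union> T"
    and f: "continuous_map (top_of_set (A \<inter> S)) Y f"
    and g: "continuous_map (top_of_set (A \<inter> T)) Y g"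
    and agree: "\<And>x. x \<in> A \<Longrightarrow> x \<in> S \<Longrightarrow> x \<in> T \<Longrightarrow> f x = g x"
  shows "continuous_map (top_of_set A) Y (\<lambda>x. if x \<in> S then f x else g x)"
proof (rule continuous_map_cases)
  have closure_in: "top_of_set A closure_of {x. x \<in> S} \<subseteq> A \<inter> S"
    using closure_minimal[of "A \<inter> S" S] \<open>closed S\<close> by (auto simp: closure_of_subtopology)
  have closure_out: "top_of_set A closure_of {x. x \<notin> S} \<subseteq> A \<inter> T"
    using closure_minimal[of "A \<inter> {x. x \<notin> S}" T] \<open>closed T\<close> \<open>A \<subseteq> S \<union> T\<close>
    by (auto simp: closure_of_subtopology)
  show "continuous_map (subtopology (top_of_set A) (top_of_set A closure_of {x. x \<in> S})) Y f"
    using f closure_in by (auto simp: subtopology_subtopology intro: continuous_map_from_subtopology_mono)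
  show "continuous_map (subtopology (top_of_set A) (top_of_set A closure_of {x. x \<notin> S})) Y g"
    using g closure_out by (auto simp: subtopology_subtopology intro: continuous_map_from_subtopology_mono)
  fix x assume "x \<in> top_of_set A frontier_of {x. x \<in> S}"
  moreover have "top_of_set A frontier_of {x. x \<in> S} \<subseteq>
      top_of_set A closure_of {x. x \<in> S} \<inter> top_of_set A closure_of {x. x \<notin> S}"
    unfolding frontier_of_closures by (intro Int_mono order_refl closure_of_mono) auto
  ultimately show "f x = g x"
    using closure_in closure_out agree by blast
qed

lemma continuous_map_fP:
  assumes cont: "continuous_on N f" and "closed N" "closed L"
    and maps_N: "\<And>x. x \<in> N \<Longrightarrow> x \<notin> L \<Longrightarrow> f x \<in> N"
    and disjoint: "f ` L \<inter> closure (N - L) = {}"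
  shows "continuous_map (quot_space N L) (quot_space N L) (fP N L f)"
proof (rule continuous_map_from_quot_space)
  define C where "C = closure (N - L)"
  have "C \<subseteq> N"
    unfolding C_def using \<open>closed N\<close> by (simp add: closure_minimal)
  have f_C: "f ` C \<subseteq> N"
    unfolding C_def using continuous_on_subset[OF cont] \<open>C \<subseteq> N\<close> \<open>closed N\<close> maps_N
    by (intro image_closure_subset) (auto simp: C_def)
  have "continuous_map (top_of_set N) (quot_space N L) (\<lambda>x. if x \<in> L then L else pquot L (f x))"
  proof (rule continuous_map_top_of_set_cases)
    show "closed C" "N \<subseteq> L \<union> C"
      using closure_subset[of "N - L"] by (auto simp: C_def)
    have "continuous_map (top_of_set C) (top_of_set N) f"
      using continuous_on_subset[OF cont \<open>C \<subseteq> N\<close>] f_C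
      by (simp add: continuous_map_in_subtopology image_subset_iff_funcset)
    then have "continuous_map (top_of_set C) (quot_space N L) (pquot L \<circ> f)"
      using continuous_map_pquot by (rule continuous_map_compose)
    then show "continuous_map (top_of_set (N \<inter> C)) (quot_space N L) (\<lambda>x. pquot L (f x))"
      using \<open>C \<subseteq> N\<close> by (simp add: Int_absorb1 o_def)
  next
    fix x assume "x \<in> L" "x \<in> C"
    then have "f x \<in> N" "f x \<notin> C"
      using f_C disjoint by (auto simp: C_def)
    then have "f x \<in> L"
      using closure_subset[of "N - L"] by (auto simp: C_def)
    then show "L = pquot L (f x)"
      by simp
  qed (simp_all add: \<open>closed L\<close>)
  then show "continuous_map (top_of_set N) (quot_space N L) (fP N L f \<circ> pquot L)"
    by (simp add: fP_pquot o_def)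
qed simp

definition quot_incl :: "'a set \<Rightarrow> 'a set \<Rightarrow> 'a set \<Rightarrow> 'a set" where
  "quot_incl L' L y = (if y = L' then L else pquot L (the_elem y))"

lemma quot_incl_base [simp]: "quot_incl L' L L' = L"
  by (simp add: quot_incl_def)

lemma quot_incl_pquot: "L' \<subseteq> L \<Longrightarrow> quot_incl L' L (pquot L' x) = pquot L x"
  by (auto simp: quot_incl_def pquot_def)

lemma continuous_map_quot_incl:
  assumes "L' \<subseteq> L" "N \<subseteq> N'"
  shows "continuous_map (quot_space N L') (quot_space N' L) (quot_incl L' L)"
proof (rule continuous_map_from_quot_space)
  have "continuous_map (top_of_set N) (quot_space N' L) (pquot L)"
    using continuous_map_pquot \<open>N \<subseteq> N'\<close> by (rule continuous_map_from_subtopology_mono)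
  then show "continuous_map (top_of_set N) (quot_space N' L) (quot_incl L' L \<circ> pquot L')"
    using \<open>L' \<subseteq> L\<close> by (simp add: quot_incl_pquot o_def)
qed simp

lemma continuous_map_extend_to_quot_union:
  assumes "closed N" "closed L" "L' \<subseteq> L"
    and cont: "continuous_map (quot_space N L') Y g" and "y0 \<in> topspace Y"
    and collapse: "\<And>x. x \<in> N \<Longrightarrow> x \<in> L \<Longrightarrow> g (pquot L' x) = y0"
  shows "continuous_map (quot_space (N \<union> L) L) Y (\<lambda>y. if y = L then y0 else g y)"
proof (rule continuous_map_from_quot_space)
  have "continuous_map (top_of_set (N \<union> L)) Y (\<lambda>x. if x \<in> L then y0 else g (pquot L' x))"
  proof (rule continuous_map_top_of_set_cases)
    have "continuous_map (top_of_set N) Y (g \<circ> pquot L')"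
      using continuous_map_pquot cont by (rule continuous_map_compose)
    then show "continuous_map (top_of_set ((N \<union> L) \<inter> N)) Y (\<lambda>x. g (pquot L' x))"
      by (simp add: Int_absorb1 o_def)
  qed (use assms in auto)
  then show "continuous_map (top_of_set (N \<union> L)) Y ((\<lambda>y. if y = L then y0 else g y) \<circ> pquot L)"
  proof (rule continuous_map_eq)
    fix x assume "x \<in> topspace (top_of_set (N \<union> L))"
    show "(if x \<in> L then y0 else g (pquot L' x)) = ((\<lambda>y. if y = L then y0 else g y) \<circ> pquot L) x"
    proof (cases "x \<in> L")
      case False
      with \<open>L' \<subseteq> L\<close> have "x \<notin> L'" "{x} \<noteq> L"
        by auto
      with False show ?thesis
        by simp
    qed simp
  qed
qed (simp add: \<open>y0 \<in> topspace Y\<close>)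

lemma filtration_pair_subset:
  assumes "filtration_pair X U f S N L"
  shows "N \<subseteq> X"
proof -
  have "N = top_of_set X closure_of (top_of_set X interior_of N)"
    using assms by (simp add: filtration_pair_def regular_closed_in_def)
  also have "\<dots> \<subseteq> X"
    using closure_of_subset_topspace by fastforce
  finally show ?thesis .
qed

lemma filtration_pair_closure:
  assumes "filtration_pair X U f S N L"
  shows "top_of_set X closure_of (N - L) = closure (N - L)"
proof -
  have "closure (N - L) \<subseteq> N"
    using assms by (intro closure_minimal) (auto simp: filtration_pair_def compact_imp_closed)
  moreover have "X \<inter> (N - L) = N - L"
    using filtration_pair_subset[OF assms] by blast
  ultimately show ?thesis
    using filtration_pair_subset[OF assms] by (auto simp: closure_of_subtopology)
qed

lemma filtration_pair_maps_N:
  assumes "filtration_pair X U f S N L" "x \<in> N" "x \<notin> L"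
  shows "f x \<in> N"
proof (rule ccontr)
  assume "f x \<notin> N"
  then have "x \<in> exit_set X f N"
    using \<open>x \<in> N\<close> interior_of_subset[of "top_of_set X" N] by (auto simp: exit_set_def)
  then have "x \<in> L"
    using assms(1) interior_of_subset[of "top_of_set N" L] by (auto simp: filtration_pair_def)
  with \<open>x \<notin> L\<close> show False
    by contradiction
qed

lemma continuous_map_fP_filtration_pair:
  assumes "continuous_on U f" "filtration_pair X U f S N L"
  shows "continuous_map (quot_space N L) (quot_space N L) (fP N L f)"
proof (rule continuous_map_fP)
  show "continuous_on N f"
    using assms by (auto simp: filtration_pair_def intro: continuous_on_subset)
  show "closed N" "closed L"
    using assms(2) by (auto simp: filtration_pair_def compact_imp_closed)
  show "f x \<in> N" if "x \<in> N" "x \<notin> L" for x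
    using filtration_pair_maps_N[OF assms(2) that] .
  show "f ` L \<inter> closure (N - L) = {}"
    using assms(2) by (simp add: filtration_pair_def filtration_pair_closure[OF assms(2)])
qed

lemma filtration_pairs_collapse:
  assumes cont: "continuous_on U f"
    and P': "filtration_pair X U f S N L'" and P: "filtration_pair X U f S (N \<union> L) L"
    and maps_L: "f ` L \<subseteq> L"
  obtains M where "M > 0" "\<And>x. x \<in> N \<Longrightarrow> x \<in> L \<Longrightarrow> (fP N L' f ^^ M) (pquot L' x) = L'"
proof -
  define K where "K = f ` L \<inter> closure (N - L')"
  have "L \<subseteq> U"
    using P by (auto simp: filtration_pair_def)
  have "compact K"
    unfolding K_def using compact_continuous_image[OF continuous_on_subset[OF cont \<open>L \<subseteq> U\<close>]] P
    by (intro compact_Int_closed) (auto simp: filtration_pair_def)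
  moreover have "continuous_on K f"
    using \<open>L \<subseteq> U\<close> maps_L by (intro continuous_on_subset[OF cont]) (auto simp: K_def)
  moreover have "Inv f K = {}"
  proof -
    have "Inv f K \<subseteq> Inv f (closure (N - L'))"
      by (rule Inv_mono) (simp add: K_def)
    also have "\<dots> = Inv f (closure (N \<union> L - L))"
      using P P' by (simp add: filtration_pair_def filtration_pair_closure[OF P] filtration_pair_closure[OF P'])
    also have "\<dots> \<subseteq> closure (N \<union> L - L)"
      by (rule Inv_subset)
    finally show ?thesis
      using Inv_subset[of f K] P by (auto simp: K_def filtration_pair_def filtration_pair_closure[OF P])
  qed
  ultimately have "\<exists>m. \<forall>y\<in>K. \<exists>j\<le>m. (f^^j) y \<notin> K"
    by (rule uniform_exit_time)
  then obtain m where m: "\<And>y. y \<in> K \<Longrightarrow> \<exists>j\<le>m. (f^^j) y \<notin> K"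
    by blast
  have "(fP N L' f ^^ Suc m) (pquot L' x) = L'" if "x \<in> N" "x \<in> L" for x
  proof -
    have "\<exists>i\<le>Suc m. (f^^i) x \<in> L'"
    proof (rule ccontr)
      assume "\<not> ?thesis"
      then have outside: "(f^^i) x \<notin> L'" if "i \<le> Suc m" for i
        using that by blast
      have in_N: "(f^^i) x \<in> N" if "i \<le> Suc m" for i
        using that
      proof (induction i)
        case (Suc i)
        then show ?case
          using filtration_pair_maps_N[OF P'] outside[of i] by simp
      qed (simp add: \<open>x \<in> N\<close>)
      have in_L: "(f^^i) x \<in> L" for i
        using \<open>x \<in> L\<close> maps_L by (induction i) auto
      have "(f^^j) (f x) \<in> K" if "j \<le> m" for j
        using in_N[of "Suc j"] outside[of "Suc j"] in_L[of j] closure_subset[of "N - L'"] that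
        by (auto simp: K_def funpow_swap1 [symmetric])
      with m[of "f x"] show False
        by fastforce
    qed
    then show ?thesis
      by (simp add: funpow_fP_pquot del: funpow.simps)
  qed
  then show ?thesis
    by (intro that[of "Suc m"]) auto
qed

locale collapsing_nested_pair =
  fixes N L L' :: "'a set" and f :: "'a \<Rightarrow> 'a" and M :: nat
  assumes L'_subset: "L' \<subseteq> L"
    and maps_L: "f ` L \<subseteq> L"
    and maps_N: "\<And>x. x \<in> N \<Longrightarrow> x \<notin> L' \<Longrightarrow> f x \<in> N"
    and collapse: "\<And>x. x \<in> N \<Longrightarrow> x \<in> L \<Longrightarrow> (fP N L' f ^^ M) (pquot L' x) = L'"
begin

definition collapsed_iterate :: "'a set \<Rightarrow> 'a set" where
  "collapsed_iterate y = (if y = L then L' else (fP N L' f ^^ M) y)"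

lemma quot_incl_fP: "quot_incl L' L (fP N L' f y) = fP (N \<union> L) L f (quot_incl L' L y)"
proof (cases "y = L'")
  case False
  define z where "z = the_elem y"
  have "quot_incl L' L (fP N L' f y) = pquot L (f z)"
    using False by (simp add: fP_def z_def quot_incl_pquot[OF L'_subset])
  moreover have "fP (N \<union> L) L f (quot_incl L' L y) = (if z \<in> L then L else pquot L (f z))"
    using False by (simp add: quot_incl_def z_def fP_pquot)
  moreover have "f z \<in> L" if "z \<in> L"
    using that maps_L by blast
  ultimately show ?thesis
    by simp
qed simp

lemma quot_incl_funpow_fP:
  "quot_incl L' L ((fP N L' f ^^ k) y) = (fP (N \<union> L) L f ^^ k) (quot_incl L' L y)"
  by (induction k) (simp_all add: quot_incl_fP)

lemma collapsed_iterate_fP: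
  assumes "y \<in> quot_carrier (N \<union> L) L"
  shows "collapsed_iterate (fP (N \<union> L) L f y) = fP N L' f (collapsed_iterate y)"
  using assms
proof (cases rule: quot_carrierE)
  case (2 x)
  then have "x \<in> N" "x \<notin> L'"
    using L'_subset by auto
  then have "f x \<in> N"
    by (rule maps_N)
  have "fP N L' f (collapsed_iterate y) = (fP N L' f ^^ M) (pquot L' (f x))"
    using 2 \<open>x \<notin> L'\<close> by (auto simp: collapsed_iterate_def funpow_swap1 fP_pquot)
  also have "\<dots> = collapsed_iterate (fP (N \<union> L) L f y)"
  proof (cases "f x \<in> L")
    case True
    then show ?thesis
      using 2 collapse[OF \<open>f x \<in> N\<close> True] by (simp add: collapsed_iterate_def)
  next
    case False
    with L'_subset have "f x \<notin> L'" "{f x} \<noteq> L"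
      by auto
    with False 2 show ?thesis
      by (simp add: collapsed_iterate_def)
  qed
  finally show ?thesis ..
qed (simp add: collapsed_iterate_def)

lemma collapsed_iterate_quot_incl:
  assumes "y \<in> quot_carrier N L'"
  shows "collapsed_iterate (quot_incl L' L y) = (fP N L' f ^^ M) y"
  using assms
proof (cases rule: quot_carrierE)
  case (2 x)
  then have y: "y = pquot L' x"
    by simp
  then have incl: "quot_incl L' L y = pquot L x"
    by (simp add: quot_incl_pquot[OF L'_subset])
  show ?thesis
  proof (cases "x \<in> L")
    case True
    then show ?thesis
      unfolding incl using collapse[OF \<open>x \<in> N\<close> True] by (simp add: y collapsed_iterate_def)
  next
    case False
    then have "{x} \<noteq> L"
      by auto
    with False \<open>x \<notin> L'\<close> show ?thesis
      unfolding incl by (simp add: y collapsed_iterate_def)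
  qed
qed (simp add: collapsed_iterate_def)

lemma quot_incl_collapsed_iterate:
  assumes "y \<in> quot_carrier (N \<union> L) L"
  shows "quot_incl L' L (collapsed_iterate y) = (fP (N \<union> L) L f ^^ M) y"
  using assms
proof (cases rule: quot_carrierE)
  case (2 x)
  then have "quot_incl L' L y = y"
    using L'_subset by (auto simp: quot_incl_def)
  with 2 show ?thesis
    by (auto simp: collapsed_iterate_def quot_incl_funpow_fP)
qed (simp add: collapsed_iterate_def)

end

theorem mainTheorem18:
  fixes X U S N L L' :: "'a::metric_space set" and f :: "'a \<Rightarrow> 'a"
  assumes "locally compact X"
    and "openin (top_of_set X) U"
    and "continuous_on U f" and "f ` U \<subseteq> X"
    and "isolated_invariant_set X U f S"
    and "filtration_pair X U f S N L'"
    and "filtration_pair X U f S (N \<union> L) L"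
    and "L' \<subseteq> L"
    and "f ` L \<subseteq> (top_of_set X) interior_of L"
  shows "shift_equivalent (quot_space N L') L' (fP N L' f) (quot_space (N \<union> L) L) L (fP (N \<union> L) L f)"
proof -
  have maps_L: "f ` L \<subseteq> L"
    using assms(9) interior_of_subset[of "top_of_set X" L] by blast
  obtain M where "M > 0" and collapse: "\<And>x. x \<in> N \<Longrightarrow> x \<in> L \<Longrightarrow> (fP N L' f ^^ M) (pquot L' x) = L'"
    using filtration_pairs_collapse[OF assms(3,6,7) maps_L] by blast
  interpret collapsing_nested_pair N L L' f M
    using assms(8) maps_L filtration_pair_maps_N[OF assms(6)] collapse by unfold_locales auto
  have "closed N" "closed L"
    using assms(6,7) by (auto simp: filtration_pair_def compact_imp_closed)
  have r: "continuous_map (quot_space N L') (quot_space (N \<union> L) L) (quot_incl L' L)"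
    using assms(8) by (rule continuous_map_quot_incl) simp
  have "continuous_map (quot_space N L') (quot_space N L') (fP N L' f ^^ M)"
    using continuous_map_fP_filtration_pair[OF assms(3,6)] by (rule continuous_map_funpow)
  then have s: "continuous_map (quot_space (N \<union> L) L) (quot_space N L') collapsed_iterate"
    unfolding collapsed_iterate_def
    using \<open>closed N\<close> \<open>closed L\<close> assms(8) collapse by (intro continuous_map_extend_to_quot_union) auto
  show ?thesis
    unfolding shift_equivalent_def
    using \<open>M > 0\<close> r s quot_incl_fP collapsed_iterate_fP collapsed_iterate_quot_incl quot_incl_collapsed_iterate
    by (intro exI[of _ M] exI[of _ "quot_incl L' L"] exI[of _ collapsed_iterate] conjI ballI)
      (auto simp: collapsed_iterate_def)
qed

end
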